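(* Let $V\subseteq\gamma_D$ be finite with $|V|\ge D+1$, let $T$ be a triangulation of $\mathrm{conv}(V)$ all of whose vertices lie in $V$, and let $\sigma\subseteq V$ be a $k$-simplex with $\lceil D/2\rceil\le k\le D$. If $T$ contains the $\lceil D/2\rceil$-dimensional skeleton of $\sigma$ (all faces of $\sigma$ of dimension at most $\lceil D/2\rceil$), then $\sigma\in T$.
   Context: $\gamma_D=\{(t,t^2,\dots,t^D):t\in\mathbb{R}\}$ is the moment curve in $\mathbb{R}^D$. A $k$-simplex on $\gamma_D$ is $\mathrm{conv}(\sigma)$ for $\sigma\subseteq\gamma_D$ with $|\sigma|=k+1$. A triangulation of a polytope is a geometric simplicial complex whose union is the polytope. *)

theory Defs
  imports "HOL-Analysis.Analysis"
begin

text \<open>Moment curve in R^D, D = CARD('n). Coordinates are indexed by a finite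
linearly ordered type; the i-th coordinate (in the order of 'n, counted from 1)
is t to the power i.\<close>
definition moment_point :: "real \<Rightarrow> real ^ 'n::{finite,linorder}" where
  "moment_point t = (\<chi> i. t ^ card {j. j \<le> i})"

definition moment_curve :: "(real ^ 'n::{finite,linorder}) set" where
  "moment_curve = range moment_point"

definition simplicial_complex :: "('a::euclidean_space) set set \<Rightarrow> bool" where
  "simplicial_complex T \<longleftrightarrow>
     (\<forall>\<sigma>\<in>T. finite \<sigma> \<and> \<sigma> \<noteq> {} \<and> \<not> affine_dependent \<sigma>) \<and>
     (\<forall>\<sigma>\<in>T. \<forall>\<tau>. \<tau> \<subseteq> \<sigma> \<and> \<tau> \<noteq> {} \<longrightarrow> \<tau> \<in> T) \<and>
     (\<forall>\<sigma>\<in>T. \<forall>\<tau>\<in>T. convex hull \<sigma> \<inter> convex hull \<tau> = convex hull (\<sigma> \<inter> \<tau>))"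

definition triangulation_of :: "('a::euclidean_space) set set \<Rightarrow> 'a set \<Rightarrow> bool" where
  "triangulation_of T P \<longleftrightarrow> simplicial_complex T \<and> \<Union>((\<lambda>\<sigma>. convex hull \<sigma>) ` T) = P"

end

theory Submission
  imports Defs "HOL-Computational_Algebra.Polynomial"
begin

text \<open>
  Suppose \<sigma> \<notin> T. The barycentre of \<sigma> lies in the relative interior of a simplex \<tau> of T, and
  comparing the two positive barycentric representations yields disjoint P \<subseteq> \<sigma> and N \<subseteq> \<tau>
  whose convex hulls meet. Affine functions restricted to the moment curve are exactly the
  polynomials of degree at most D, so no such polynomial has the sign pattern of P against N
  along the curve. Hence the pattern changes sign at least D + 1 times, and D + 2 alternating
  points give P' \<subseteq> P and N' \<subseteq> N whose hulls still meet: a separating hyperplane would be a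
  polynomial of degree at most D with D + 1 roots. Since P' has at most ceil(D/2) + 1 points, it
  is a face of \<sigma> lying in T, and N' is a face of \<tau>; but disjoint simplices of T have disjoint
  convex hulls.
\<close>

lemma simplicial_complex_finite: "simplicial_complex T \<Longrightarrow> \<rho> \<in> T \<Longrightarrow> finite \<rho>"
  by (simp add: simplicial_complex_def)

lemma simplicial_complex_face:
  "simplicial_complex T \<Longrightarrow> \<rho> \<in> T \<Longrightarrow> \<tau> \<subseteq> \<rho> \<Longrightarrow> \<tau> \<noteq> {} \<Longrightarrow> \<tau> \<in> T"
  unfolding simplicial_complex_def by blast

lemma simplicial_complex_disjoint_convex_hulls:
  assumes "simplicial_complex T" and "\<rho> \<in> T" and "\<tau> \<in> T" and "\<rho> \<inter> \<tau> = {}"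
  shows "convex hull \<rho> \<inter> convex hull \<tau> = {}"
  using assms unfolding simplicial_complex_def by (metis convex_hull_empty)

lemma triangulation_point_in_open_simplex:
  assumes "triangulation_of T K" and "x \<in> K"
  obtains \<tau> \<mu> where "\<tau> \<in> T" and "\<forall>v\<in>\<tau>. 0 < \<mu> v" and "sum \<mu> \<tau> = 1" and "(\<Sum>v\<in>\<tau>. \<mu> v *\<^sub>R v) = x"
proof -
  have T: "simplicial_complex T" "\<Union>((\<lambda>\<sigma>. convex hull \<sigma>) ` T) = K"
    using assms(1) by (simp_all add: triangulation_of_def)
  obtain \<rho> where "\<rho> \<in> T" "x \<in> convex hull \<rho>"
    using T(2) assms(2) by blast
  have "finite \<rho>" using T(1) \<open>\<rho> \<in> T\<close> by (rule simplicial_complex_finite)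
  then obtain \<mu> where \<mu>: "\<forall>v\<in>\<rho>. 0 \<le> \<mu> v" "sum \<mu> \<rho> = 1" "(\<Sum>v\<in>\<rho>. \<mu> v *\<^sub>R v) = x"
    using \<open>x \<in> convex hull \<rho>\<close> unfolding convex_hull_finite[OF \<open>finite \<rho>\<close>] by blast
  define \<tau> where "\<tau> = {v\<in>\<rho>. 0 < \<mu> v}"
  have "\<tau> \<subseteq> \<rho>" by (simp add: \<tau>_def)
  have "sum \<mu> \<tau> = sum \<mu> \<rho>"
    using \<open>finite \<rho>\<close> \<open>\<tau> \<subseteq> \<rho>\<close> \<mu>(1) by (intro sum.mono_neutral_left) (auto simp: \<tau>_def)
  moreover have "(\<Sum>v\<in>\<tau>. \<mu> v *\<^sub>R v) = (\<Sum>v\<in>\<rho>. \<mu> v *\<^sub>R v)"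
    using \<open>finite \<rho>\<close> \<open>\<tau> \<subseteq> \<rho>\<close> \<mu>(1) by (intro sum.mono_neutral_left) (auto simp: \<tau>_def)
  ultimately have "sum \<mu> \<tau> = 1" "(\<Sum>v\<in>\<tau>. \<mu> v *\<^sub>R v) = x" using \<mu>(2,3) by simp_all
  moreover have "\<tau> \<in> T"
  proof -
    have "\<tau> \<noteq> {}" using \<open>sum \<mu> \<tau> = 1\<close> by auto
    then show ?thesis by (rule simplicial_complex_face[OF T(1) \<open>\<rho> \<in> T\<close> \<open>\<tau> \<subseteq> \<rho>\<close>])
  qed
  moreover have "\<forall>v\<in>\<tau>. 0 < \<mu> v" by (simp add: \<tau>_def)
  ultimately show ?thesis using that by blast
qed

lemma normalized_sum_in_convex_hull:
  fixes A :: "'a::real_vector set"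
  assumes "finite A" and "\<forall>v\<in>A. 0 \<le> u v" and "sum u A > 0"
  shows "(\<Sum>v\<in>A. (u v / sum u A) *\<^sub>R v) \<in> convex hull A"
  unfolding convex_hull_finite[OF assms(1)] using assms(2,3)
  by (auto intro!: exI[of _ "\<lambda>v. u v / sum u A"] simp: sum_divide_distrib[symmetric])

lemma convex_hull_positive_negative_parts_meet:
  fixes w :: "'a::euclidean_space \<Rightarrow> real"
  assumes "finite W" and "sum w W = 0" and "(\<Sum>v\<in>W. w v *\<^sub>R v) = 0" and "\<exists>v\<in>W. w v \<noteq> 0"
  shows "convex hull {v\<in>W. 0 < w v} \<inter> convex hull {v\<in>W. w v < 0} \<noteq> {}"
proof -
  define Pos where "Pos = {v\<in>W. 0 < w v}"
  define Neg where "Neg = {v\<in>W. w v < 0}"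
  define s where "s = sum w Pos"
  have fin: "finite Pos" "finite Neg" using assms(1) by (simp_all add: Pos_def Neg_def)
  have s_Neg: "sum (\<lambda>v. - w v) Neg = s"
    using Radon_s_lemma[OF assms(1,2)] by (simp add: s_def Pos_def Neg_def sum_negf)
  have vec_Neg: "(\<Sum>v\<in>Neg. (- w v) *\<^sub>R v) = (\<Sum>v\<in>Pos. w v *\<^sub>R v)"
    using Radon_v_lemma[OF assms(1,3), of w] by (simp add: Pos_def Neg_def sum_negf)
  have "s > 0"
  proof -
    obtain v where "v \<in> W" "w v \<noteq> 0" using assms(4) by blast
    then consider "v \<in> Pos" | "v \<in> Neg" by (force simp: Pos_def Neg_def)
    then show ?thesis
    proof cases
      case 1
      then show ?thesis unfolding s_def using fin by (intro sum_pos2) (auto simp: Pos_def)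
    next
      case 2
      then have "sum (\<lambda>v. - w v) Neg > 0" using fin by (intro sum_pos2) (auto simp: Neg_def)
      then show ?thesis using s_Neg by simp
    qed
  qed
  have rescale: "(\<Sum>v\<in>A. (u v / s) *\<^sub>R v) = (1 / s) *\<^sub>R (\<Sum>v\<in>A. u v *\<^sub>R v)" for A :: "'a set" and u
    by (simp add: scaleR_sum_right)
  have "(\<Sum>v\<in>Pos. (w v / s) *\<^sub>R v) \<in> convex hull Pos"
    using normalized_sum_in_convex_hull[OF fin(1), of w] \<open>s > 0\<close> by (simp add: s_def Pos_def)
  moreover have "(\<Sum>v\<in>Neg. (- w v / s) *\<^sub>R v) \<in> convex hull Neg"
    using normalized_sum_in_convex_hull[OF fin(2), of "\<lambda>v. - w v"] \<open>s > 0\<close> s_Neg by (simp add: Neg_def)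
  moreover have "(\<Sum>v\<in>Neg. (- w v / s) *\<^sub>R v) = (\<Sum>v\<in>Pos. (w v / s) *\<^sub>R v)"
    using rescale[of "\<lambda>v. - w v"] rescale[of w] vec_Neg by simp
  ultimately show ?thesis unfolding Pos_def Neg_def by auto
qed

lemma distinct_open_simplices_meet_imp_disjoint_faces_meet:
  fixes \<sigma> \<tau> :: "'a::euclidean_space set"
  assumes "finite \<sigma>" and "finite \<tau>" and "\<sigma> \<noteq> \<tau>"
    and "\<forall>v\<in>\<sigma>. 0 < \<alpha> v" and "sum \<alpha> \<sigma> = 1" and "\<forall>v\<in>\<tau>. 0 < \<beta> v" and "sum \<beta> \<tau> = 1"
    and "(\<Sum>v\<in>\<sigma>. \<alpha> v *\<^sub>R v) = (\<Sum>v\<in>\<tau>. \<beta> v *\<^sub>R v)"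
  shows "\<exists>P\<subseteq>\<sigma>. \<exists>N\<subseteq>\<tau>. P \<inter> N = {} \<and> convex hull P \<inter> convex hull N \<noteq> {}"
proof -
  define W where "W = \<sigma> \<union> \<tau>"
  define w where "w v = (if v \<in> \<sigma> then \<alpha> v else 0) - (if v \<in> \<tau> then \<beta> v else 0)" for v
  have "finite W" "\<sigma> \<subseteq> W" "\<tau> \<subseteq> W" using assms(1,2) by (simp_all add: W_def)
  have restrict: "(\<Sum>v\<in>W. if v \<in> A then f v else 0) = sum f A" if "A \<subseteq> W" for A and f :: "'a \<Rightarrow> 'b::comm_monoid_add"
    using sum.inter_restrict[OF \<open>finite W\<close>, of f A] that by (simp add: Int_absorb1)
  have "sum w W = sum \<alpha> \<sigma> - sum \<beta> \<tau>"
    unfolding w_def sum_subtractf by (simp add: restrict \<open>\<sigma> \<subseteq> W\<close> \<open>\<tau> \<subseteq> W\<close>)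
  moreover have "(\<Sum>v\<in>W. w v *\<^sub>R v) = (\<Sum>v\<in>\<sigma>. \<alpha> v *\<^sub>R v) - (\<Sum>v\<in>\<tau>. \<beta> v *\<^sub>R v)"
    unfolding w_def scaleR_diff_left sum_subtractf if_distrib[of "\<lambda>c. c *\<^sub>R _"] scaleR_zero_left
    by (simp add: restrict \<open>\<sigma> \<subseteq> W\<close> \<open>\<tau> \<subseteq> W\<close>)
  moreover have "\<exists>v\<in>W. w v \<noteq> 0"
  proof -
    obtain v where "v \<in> \<sigma> - \<tau> \<or> v \<in> \<tau> - \<sigma>" using assms(3) by blast
    then have "w v \<noteq> 0" using assms(4,6) by (auto simp: w_def)
    then show ?thesis using \<open>v \<in> \<sigma> - \<tau> \<or> v \<in> \<tau> - \<sigma>\<close> by (auto simp: W_def)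
  qed
  ultimately have "convex hull {v\<in>W. 0 < w v} \<inter> convex hull {v\<in>W. w v < 0} \<noteq> {}"
    using assms(5,7,8) by (intro convex_hull_positive_negative_parts_meet[OF \<open>finite W\<close>]) simp_all
  moreover have "{v\<in>W. 0 < w v} \<subseteq> \<sigma>"
    using assms(6) by (auto simp: w_def less_le_not_le)
  moreover have "{v\<in>W. w v < 0} \<subseteq> \<tau>"
    using assms(4) by (auto simp: w_def less_le_not_le)
  moreover have "{v\<in>W. 0 < w v} \<inter> {v\<in>W. w v < 0} = {}" by auto
  ultimately show ?thesis by blast
qed

lemma triangulation_crossing_simplex:
  fixes \<sigma> :: "'a::euclidean_space set"
  assumes "triangulation_of T K" and "finite \<sigma>" and "\<sigma> \<noteq> {}" and "convex hull \<sigma> \<subseteq> K" and "\<sigma> \<notin> T"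
  obtains \<tau> P N where "\<tau> \<in> T" and "P \<subseteq> \<sigma>" and "N \<subseteq> \<tau>" and "P \<inter> N = {}"
    and "convex hull P \<inter> convex hull N \<noteq> {}"
proof -
  define \<beta> where "\<beta> v = 1 / real (card \<sigma>)" for v :: 'a
  have \<beta>: "\<forall>v\<in>\<sigma>. 0 < \<beta> v" "sum \<beta> \<sigma> = 1"
    using assms(2,3) by (simp_all add: \<beta>_def card_gt_0_iff)
  then have "(\<Sum>v\<in>\<sigma>. \<beta> v *\<^sub>R v) \<in> convex hull \<sigma>"
    unfolding convex_hull_finite[OF assms(2)] by (auto intro: less_imp_le)
  then obtain \<tau> \<mu> where \<tau>: "\<tau> \<in> T" "\<forall>v\<in>\<tau>. 0 < \<mu> v" "sum \<mu> \<tau> = 1"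
      "(\<Sum>v\<in>\<tau>. \<mu> v *\<^sub>R v) = (\<Sum>v\<in>\<sigma>. \<beta> v *\<^sub>R v)"
    using triangulation_point_in_open_simplex[OF assms(1)] assms(4) by blast
  have "finite \<tau>" "\<sigma> \<noteq> \<tau>"
    using simplicial_complex_finite \<tau>(1) assms(1,5) by (auto simp: triangulation_of_def)
  then show ?thesis
    using distinct_open_simplices_meet_imp_disjoint_faces_meet[OF assms(2) _ _ \<beta> \<tau>(2,3) \<tau>(4)[symmetric]]
      that \<tau>(1) by blast
qed

lemma length_le_card_roots_above_if_sign_changes:
  fixes g :: "real poly"
  assumes "g \<noteq> 0" and "successively (\<lambda>x y. x < y \<and> poly g x * poly g y < 0) (x # xs)"
  shows "length xs \<le> card {r. poly g r = 0 \<and> x < r}"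
  using assms(2)
proof (induction xs arbitrary: x)
  case Nil
  then show ?case by simp
next
  case (Cons y ys)
  then have "x < y" "poly g x * poly g y < 0" "successively (\<lambda>x y. x < y \<and> poly g x * poly g y < 0) (y # ys)"
    by simp_all
  obtain r where r: "x < r" "r < y" "poly g r = 0" using poly_IVT[OF \<open>x < y\<close> \<open>poly g x * poly g y < 0\<close>] by blast
  have fin: "finite {r. poly g r = 0 \<and> z < r}" for z
    using poly_roots_finite[OF assms(1)] by (rule finite_subset[rotated]) auto
  have "insert r {r. poly g r = 0 \<and> y < r} \<subseteq> {r. poly g r = 0 \<and> x < r}" using r \<open>x < y\<close> by auto
  then have "card (insert r {r. poly g r = 0 \<and> y < r}) \<le> card {r. poly g r = 0 \<and> x < r}"
    using fin by (rule card_mono[rotated])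
  moreover have "card (insert r {r. poly g r = 0 \<and> y < r}) = Suc (card {r. poly g r = 0 \<and> y < r})"
    using fin r(2) by (intro card_insert_disjoint) auto
  ultimately show ?case using Cons.IH[OF \<open>successively _ (y # ys)\<close>] by simp
qed

lemma length_le_degree_if_sign_changes:
  fixes g :: "real poly"
  assumes "successively (\<lambda>x y. x < y \<and> poly g x * poly g y < 0) xs"
  shows "length xs \<le> degree g + 1"
proof (cases xs)
  case (Cons x ys)
  show ?thesis
  proof (cases ys)
    case (Cons y zs)
    then have "g \<noteq> 0" using assms \<open>xs = x # ys\<close> by auto
    have "length ys \<le> card {r. poly g r = 0 \<and> x < r}"
      using length_le_card_roots_above_if_sign_changes[OF \<open>g \<noteq> 0\<close>] assms \<open>xs = x # ys\<close> by blast
    also have "\<dots> \<le> card {r. poly g r = 0}"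
      using poly_roots_finite[OF \<open>g \<noteq> 0\<close>] by (intro card_mono) auto
    also have "\<dots> \<le> degree g" using card_poly_roots_bound[OF \<open>g \<noteq> 0\<close>] .
    finally show ?thesis using \<open>xs = x # ys\<close> by simp
  qed (use \<open>xs = x # ys\<close> in simp)
qed simp

lemma length_filter_le_if_alternating:
  assumes "successively (\<lambda>x y. c x \<noteq> c y) xs"
  shows "length (filter c xs) \<le> (length xs + 1) div 2"
  using assms
proof (induction xs rule: induct_list012)
  case (3 x y zs)
  then have "c x \<noteq> c y" "successively (\<lambda>x y. c x \<noteq> c y) zs"
    by (auto simp: successively_Cons)
  then show ?case using "3.IH"(1) by auto
qed simp_all

definition has_sign_pattern :: "real poly \<Rightarrow> real set \<Rightarrow> (real \<Rightarrow> bool) \<Rightarrow> bool" where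
  "has_sign_pattern p S c \<longleftrightarrow> (\<forall>x\<in>S. sgn (poly p x) = (if c x then 1 else -1))"

lemma has_sign_pattern_insert_sign_change:
  fixes q :: "real poly"
  assumes "has_sign_pattern q A c" and "has_sign_pattern q {..y} (\<lambda>_. c y)"
    and "\<forall>a\<in>A. y \<le> a" and "x < y" and "c x \<noteq> c y"
  obtains p where "degree p \<le> degree q + 1"
    and "has_sign_pattern p (insert x A) c" and "has_sign_pattern p {..x} (\<lambda>_. c x)"
proof
  define z where "z = (x + y) / 2"
  define p where "p = q * [:-z, 1:]"
  have sgn_p: "sgn (poly p t) = sgn (poly q t) * sgn (t - z)" for t
  proof -
    have "poly p t = poly q t * (t - z)" by (simp add: p_def algebra_simps)
    then show ?thesis by (simp add: sgn_mult)
  qed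
  show "degree p \<le> degree q + 1"
    using degree_mult_le[of q "[:-z, 1:]"] by (simp add: p_def)
  have "has_sign_pattern p A c"
    using assms(1,3,4) by (auto simp: has_sign_pattern_def sgn_p z_def)
  moreover show "has_sign_pattern p {..x} (\<lambda>_. c x)"
    using assms(2,4,5) by (auto simp: has_sign_pattern_def sgn_p z_def)
  ultimately show "has_sign_pattern p (insert x A) c"
    by (simp add: has_sign_pattern_def)
qed

text \<open>The sign of p left of Min S is part of the claim so that the induction can add a new minimum.\<close>

lemma sign_pattern_or_alternating_list:
  fixes S :: "real set" and c :: "real \<Rightarrow> bool"
  assumes "finite S" and "S \<noteq> {}"
  shows "(\<exists>p. degree p \<le> n \<and> has_sign_pattern p S c \<and> has_sign_pattern p {..Min S} (\<lambda>_. c (Min S)))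
       \<or> (\<exists>xs. length xs = n + 2 \<and> set xs \<subseteq> S \<and> hd xs = Min S
              \<and> successively (\<lambda>x y. x < y \<and> c x \<noteq> c y) xs)"
  using assms
proof (induction S arbitrary: n rule: finite_linorder_min_induct)
  case empty
  then show ?case by simp
next
  case (insert x A)
  have Min_xA: "Min (insert x A) = x"
    using insert.hyps by (auto intro: Min_eqI less_imp_le)
  show ?case
  proof (cases "A = {}")
    case True
    define p :: "real poly" where "p = [:if c x then 1 else -1:]"
    have "has_sign_pattern p (insert x A) c" "has_sign_pattern p {..x} (\<lambda>_. c x)"
      by (simp_all add: True has_sign_pattern_def p_def)
    then show ?thesis using Min_xA by (intro disjI1 exI[of _ p]) (simp add: p_def)
  next
    case False
    define y where "y = Min A"
    have "y \<in> A" and y_le: "\<forall>a\<in>A. y \<le> a" using False insert.hyps(1) by (simp_all add: y_def)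
    then have "x < y" using insert.hyps(2) by blast
    note IH = insert.IH[OF False, folded y_def]
    consider (same) "c x = c y" | (first) "c x \<noteq> c y" "n = 0"
      | (later) m where "c x \<noteq> c y" "n = Suc m"
      using not0_implies_Suc by blast
    then show ?thesis
    proof cases
      case same
      from IH[of n] show ?thesis
      proof (elim disjE exE conjE)
        fix p
        assume p: "degree p \<le> n" "has_sign_pattern p A c" "has_sign_pattern p {..y} (\<lambda>_. c y)"
        then have "has_sign_pattern p (insert x A) c" "has_sign_pattern p {..x} (\<lambda>_. c x)"
          using \<open>x < y\<close> same by (auto simp: has_sign_pattern_def)
        then show ?thesis using p(1) Min_xA by auto
      next
        fix xs
        assume xs: "length xs = n + 2" "set xs \<subseteq> A" "hd xs = y"
          "successively (\<lambda>x y. x < y \<and> c x \<noteq> c y) xs"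
        then obtain ys where "xs = y # ys" "ys \<noteq> []" by (cases xs) fastforce+
        then have "successively (\<lambda>x y. x < y \<and> c x \<noteq> c y) (x # ys)"
          using xs same insert.hyps(2) by (auto simp: successively_Cons)
        then show ?thesis using xs \<open>xs = y # ys\<close> Min_xA by (intro disjI2 exI[of _ "x # ys"]) auto
      qed
    next
      case first
      have "successively (\<lambda>x y. x < y \<and> c x \<noteq> c y) [x, y]" using first \<open>x < y\<close> by simp
      then show ?thesis using first \<open>y \<in> A\<close> Min_xA by (intro disjI2 exI[of _ "[x, y]"]) auto
    next
      case later
      from IH[of m] show ?thesis
      proof (elim disjE exE conjE)
        fix q
        assume q: "degree q \<le> m" "has_sign_pattern q A c" "has_sign_pattern q {..y} (\<lambda>_. c y)"
        obtain p where "degree p \<le> degree q + 1"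
          "has_sign_pattern p (insert x A) c" "has_sign_pattern p {..x} (\<lambda>_. c x)"
          using has_sign_pattern_insert_sign_change[OF q(2,3) y_le \<open>x < y\<close> later(1)] .
        then show ?thesis using q(1) later(2) Min_xA by (intro disjI1 exI[of _ p]) simp
      next
        fix ys
        assume ys: "length ys = m + 2" "set ys \<subseteq> A" "hd ys = y"
          "successively (\<lambda>x y. x < y \<and> c x \<noteq> c y) ys"
        then have "successively (\<lambda>x y. x < y \<and> c x \<noteq> c y) (x # ys)"
          using later(1) \<open>x < y\<close> by (auto simp: successively_Cons)
        then show ?thesis using ys later Min_xA by (intro disjI2 exI[of _ "x # ys"]) auto
      qed
    qed
  qed
qed

definition moment_exponent :: "'n::{finite,linorder} \<Rightarrow> nat" where
  "moment_exponent i = card {j. j \<le> i}"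

lemma moment_exponent_strict_mono: "strict_mono moment_exponent"
  unfolding strict_mono_def moment_exponent_def
  by (intro allI impI psubset_card_mono) (auto simp: less_le_not_le)

lemma bij_betw_moment_exponent:
  "bij_betw (moment_exponent :: 'n::{finite,linorder} \<Rightarrow> nat) UNIV {1..CARD('n)}"
proof -
  have inj: "inj (moment_exponent :: 'n \<Rightarrow> nat)"
    using moment_exponent_strict_mono strict_mono_imp_inj_on by blast
  have "moment_exponent i \<in> {1..CARD('n)}" for i :: 'n
  proof -
    have "i \<in> {j. j \<le> i}" by simp
    then show ?thesis unfolding moment_exponent_def
      by (auto simp: Suc_le_eq card_gt_0_iff intro: card_mono)
  qed
  then have "moment_exponent ` (UNIV :: 'n set) \<subseteq> {1..CARD('n)}" by auto
  moreover have "card (moment_exponent ` (UNIV :: 'n set)) = card {1..CARD('n)}"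
    using card_image[OF inj] by simp
  ultimately show ?thesis
    using inj by (simp add: bij_betw_def card_subset_eq)
qed

lemma inner_moment_point:
  "a \<bullet> (moment_point t :: (real, 'n::{finite,linorder}) vec) = (\<Sum>i\<in>UNIV. a $ i * t ^ moment_exponent i)"
  by (simp add: inner_vec_def moment_point_def moment_exponent_def)

lemma affine_on_moment_curve_is_poly:
  fixes a :: "(real, 'n::{finite,linorder}) vec"
  obtains g :: "real poly" where "degree g \<le> CARD('n)" and "\<And>t. poly g t = a \<bullet> moment_point t + b"
proof
  define g where "g = [:b:] + (\<Sum>i\<in>UNIV. monom (a $ i) (moment_exponent i))"
  have "moment_exponent i \<le> CARD('n)" for i :: 'n
    using bij_betw_apply[OF bij_betw_moment_exponent] by auto
  then have "degree (\<Sum>i\<in>UNIV. monom (a $ i) (moment_exponent i)) \<le> CARD('n)"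
    by (intro degree_sum_le) (auto intro: order_trans[OF degree_monom_le])
  then show "degree g \<le> CARD('n)"
    unfolding g_def using degree_add_le[of "[:b:]" "CARD('n)"] by simp
  show "poly g t = a \<bullet> moment_point t + b" for t
    by (simp add: g_def poly_sum poly_monom inner_moment_point)
qed

lemma poly_is_affine_on_moment_curve:
  fixes p :: "real poly"
  assumes "degree p \<le> CARD('n::{finite,linorder})"
  obtains a :: "(real, 'n::{finite,linorder}) vec" and b where "\<And>t. poly p t = a \<bullet> moment_point t + b"
proof
  fix t :: real
  have "poly p t = (\<Sum>k\<le>CARD('n). coeff p k * t ^ k)"
    unfolding poly_altdef using assms by (intro sum.mono_neutral_left) (auto simp: coeff_eq_0)
  also have "\<dots> = coeff p 0 + (\<Sum>k\<in>{1..CARD('n)}. coeff p k * t ^ k)"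
    by (simp add: atMost_atLeast0 sum.atLeast_Suc_atMost)
  also have "(\<Sum>k\<in>{1..CARD('n)}. coeff p k * t ^ k) = (\<Sum>i\<in>UNIV. coeff p (moment_exponent i) * t ^ moment_exponent (i :: 'n))"
    using sum.reindex_bij_betw[OF bij_betw_moment_exponent[where 'n='n], where g="\<lambda>k. coeff p k * t ^ k"] by simp
  finally show "poly p t = (\<chi> i. coeff p (moment_exponent i) :: (real, 'n) vec) \<bullet> moment_point t + coeff p 0"
    by (simp add: inner_moment_point)
qed

lemma moment_curve_hulls_disjoint_if_poly_separates:
  fixes P N :: "(real, 'n::{finite,linorder}) vec set"
  assumes "degree p \<le> CARD('n)"
    and "P \<subseteq> moment_point ` {t. poly p t > 0}" and "N \<subseteq> moment_point ` {t. poly p t < 0}"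
  shows "convex hull P \<inter> convex hull N = {}"
proof -
  obtain a :: "(real, 'n) vec" and b where ab: "\<And>t. poly p t = a \<bullet> moment_point t + b"
    using poly_is_affine_on_moment_curve[OF assms(1)] by blast
  have "P \<subseteq> {x. a \<bullet> x > - b}" "N \<subseteq> {x. a \<bullet> x < - b}"
    using assms(2,3) by (auto simp: ab)
  then have "convex hull P \<subseteq> {x. a \<bullet> x > - b}" "convex hull N \<subseteq> {x. a \<bullet> x < - b}"
    by (simp_all add: hull_minimal convex_halfspace_gt convex_halfspace_lt)
  then show ?thesis by force
qed

lemma moment_curve_alternating_hulls_meet:
  fixes c :: "real \<Rightarrow> bool"
  assumes "successively (\<lambda>x y. x < y \<and> c x \<noteq> c y) xs"
    and "length xs = CARD('n::{finite,linorder}) + 2"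
  shows "convex hull ((moment_point :: real \<Rightarrow> (real, 'n) vec) ` {t \<in> set xs. c t})
           \<inter> convex hull (moment_point ` {t \<in> set xs. \<not> c t}) \<noteq> {}"
proof
  define P :: "(real, 'n) vec set" where "P = moment_point ` {t \<in> set xs. c t}"
  define N :: "(real, 'n) vec set" where "N = moment_point ` {t \<in> set xs. \<not> c t}"
  assume "convex hull P \<inter> convex hull N = {}"
  moreover have "N \<noteq> {}"
  proof -
    obtain x y zs where "xs = x # y # zs"
      using assms(2) by (cases xs; cases "tl xs") auto
    then show ?thesis using assms(1) by (auto simp: N_def)
  qed
  ultimately obtain a :: "(real, 'n) vec" and b
    where ab: "\<forall>x\<in>convex hull P. a \<bullet> x < b" "\<forall>x\<in>convex hull N. a \<bullet> x > b"
    using separating_hyperplane_closed_compact[of "convex hull P" "convex hull N"]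
    by (auto simp: P_def N_def finite_imp_compact_convex_hull compact_imp_closed)
  obtain g :: "real poly" where g: "degree g \<le> CARD('n)" "\<And>t. poly g t = a \<bullet> moment_point t + - b"
    using affine_on_moment_curve_is_poly by blast
  have "poly g t < 0" if "t \<in> set xs" "c t" for t
    using that ab(1) hull_inc[of "moment_point t" P] by (auto simp: g(2) P_def)
  moreover have "poly g t > 0" if "t \<in> set xs" "\<not> c t" for t
    using that ab(2) hull_inc[of "moment_point t" N] by (auto simp: g(2) N_def)
  ultimately have "successively (\<lambda>x y. x < y \<and> poly g x * poly g y < 0) xs"
    by (rule_tac successively_mono[OF assms(1)]) (auto simp: mult_neg_pos mult_pos_neg)
  then have "length xs \<le> degree g + 1" by (rule length_le_degree_if_sign_changes)
  then show False using g(1) assms(2) by simp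
qed

lemma moment_curve_hulls_meet_small_subset:
  fixes P N :: "(real, 'n::{finite,linorder}) vec set"
  assumes "P \<union> N \<subseteq> moment_curve" and "finite P" and "finite N" and "P \<inter> N = {}"
    and "convex hull P \<inter> convex hull N \<noteq> {}"
  shows "\<exists>P'\<subseteq>P. \<exists>N'\<subseteq>N. card P' \<le> (CARD('n) + 1) div 2 + 1 \<and> convex hull P' \<inter> convex hull N' \<noteq> {}"
proof -
  obtain S where "finite S" and S: "P \<union> N = moment_point ` S"
    using finite_subset_image[of "P \<union> N" moment_point UNIV] assms(1-3) by (auto simp: moment_curve_def)
  have "S \<noteq> {}" using assms(5) S by auto
  define c where "c t \<longleftrightarrow> moment_point t \<in> P" for t
  have P_param: "P = moment_point ` {t\<in>S. c t}" and N_param: "N = moment_point ` {t\<in>S. \<not> c t}"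
    using S assms(4) by (auto simp: c_def)
  from sign_pattern_or_alternating_list[OF \<open>finite S\<close> \<open>S \<noteq> {}\<close>, of "CARD('n)" c]
  show ?thesis
  proof (elim disjE exE conjE)
    fix p :: "real poly"
    assume p: "degree p \<le> CARD('n)" "has_sign_pattern p S c"
    have "poly p t > 0" if "t \<in> S" "c t" for t
      using p(2)[unfolded has_sign_pattern_def, rule_format, OF that(1)] that(2) by (simp add: sgn_1_pos)
    moreover have "poly p t < 0" if "t \<in> S" "\<not> c t" for t
      using p(2)[unfolded has_sign_pattern_def, rule_format, OF that(1)] that(2) by (simp add: sgn_1_neg)
    ultimately have "P \<subseteq> moment_point ` {t. poly p t > 0}" "N \<subseteq> moment_point ` {t. poly p t < 0}"
      unfolding P_param N_param by auto
    then show ?thesis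
      using moment_curve_hulls_disjoint_if_poly_separates[OF p(1)] assms(5) by simp
  next
    fix xs
    assume xs: "length xs = CARD('n) + 2" "set xs \<subseteq> S" "successively (\<lambda>x y. x < y \<and> c x \<noteq> c y) xs"
    define P' :: "(real, 'n) vec set" where "P' = moment_point ` {t \<in> set xs. c t}"
    define N' :: "(real, 'n) vec set" where "N' = moment_point ` {t \<in> set xs. \<not> c t}"
    have "P' \<subseteq> P" "N' \<subseteq> N" using xs(2) by (auto simp: P'_def N'_def P_param N_param)
    have "card P' \<le> card {t \<in> set xs. c t}" unfolding P'_def by (simp add: card_image_le)
    also have "\<dots> \<le> length (filter c xs)" using card_length[of "filter c xs"] by simp
    also have "\<dots> \<le> (length xs + 1) div 2"
      using successively_mono[OF xs(3), of "\<lambda>x y. c x \<noteq> c y"]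
      by (intro length_filter_le_if_alternating) blast
    finally have "card P' \<le> (CARD('n) + 1) div 2 + 1" using xs(1) by simp
    moreover have "convex hull P' \<inter> convex hull N' \<noteq> {}"
      unfolding P'_def N'_def by (rule moment_curve_alternating_hulls_meet[OF xs(3,1)])
    ultimately show ?thesis using \<open>P' \<subseteq> P\<close> \<open>N' \<subseteq> N\<close> by blast
  qed
qed

theorem proposition3p3:
  fixes V :: "(real, 'n::{finite,linorder}) vec set"
    and T :: "(real, 'n) vec set set"
    and \<sigma> :: "(real, 'n) vec set"
    and k :: nat
  assumes "V \<subseteq> moment_curve" and "finite V" and "card V \<ge> card (UNIV :: 'n set) + 1"
    and "triangulation_of T (convex hull V)" and "\<Union>T \<subseteq> V"
    and "\<sigma> \<subseteq> V" and "card \<sigma> = k + 1"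
    and "(card (UNIV :: 'n set) + 1) div 2 \<le> k" and "k \<le> card (UNIV :: 'n set)"
    and "\<forall>\<tau>. \<tau> \<subseteq> \<sigma> \<and> \<tau> \<noteq> {} \<and> card \<tau> \<le> (card (UNIV :: 'n set) + 1) div 2 + 1 \<longrightarrow> \<tau> \<in> T"
  shows "\<sigma> \<in> T"
proof (rule ccontr)
  assume "\<sigma> \<notin> T"
  have T: "simplicial_complex T" using assms(4) by (simp add: triangulation_of_def)
  have "finite \<sigma>" "\<sigma> \<noteq> {}" using assms(2,6,7) finite_subset by auto
  then obtain \<tau> P N where PN: "\<tau> \<in> T" "P \<subseteq> \<sigma>" "N \<subseteq> \<tau>" "P \<inter> N = {}"
      "convex hull P \<inter> convex hull N \<noteq> {}"
    using triangulation_crossing_simplex[OF assms(4)] hull_mono[OF assms(6)] \<open>\<sigma> \<notin> T\<close> by metis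
  moreover have "finite P" "finite N"
    using PN(1-3) T \<open>finite \<sigma>\<close> by (auto intro: finite_subset simplicial_complex_finite)
  moreover have "P \<union> N \<subseteq> moment_curve" using PN(1-3) assms(1,5,6) by blast
  ultimately obtain P' N' where "P' \<subseteq> P" "N' \<subseteq> N" "card P' \<le> (CARD('n) + 1) div 2 + 1"
      and meet: "convex hull P' \<inter> convex hull N' \<noteq> {}"
    using moment_curve_hulls_meet_small_subset by metis
  then have "P' \<noteq> {}" "N' \<noteq> {}" by auto
  have "P' \<in> T" using assms(10) \<open>P' \<subseteq> P\<close> PN(2) \<open>card P' \<le> _\<close> \<open>P' \<noteq> {}\<close> by blast
  moreover have "N' \<in> T"
    using simplicial_complex_face[OF T PN(1)] \<open>N' \<subseteq> N\<close> PN(3) \<open>N' \<noteq> {}\<close> by blast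
  moreover have "P' \<inter> N' = {}" using PN(4) \<open>P' \<subseteq> P\<close> \<open>N' \<subseteq> N\<close> by blast
  ultimately show False using simplicial_complex_disjoint_convex_hulls[OF T] meet by blast
qed

end
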